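(* Consider the system $$\dot v=(-\mu_1-p_{11}v^2+p_{12}A^2)v-M_2 s,\quad \dot A=(-\mu_2-p_{21}v^2+p_{22}A^2)A+M_3 s,\quad \dot s=2\alpha(v+M_1 s)s,$$ under the standing assumptions of the context, with $\mu_1<0$ and $\mu_2>p_{21}\mu_1/p_{11}$. If $\mu_2$ lies in the preservation regime (i.e. "the solution" converges to $\widetilde{\mathrm{EP}}_2^-$ as $t\to+\infty$), then $v(t)=O(|\boldsymbol\mu|^{1/2})$ and $s(t)=O(|\boldsymbol\mu|)$ for all $t>0$.
   Context: Standing assumptions: $\alpha>0$, $M_1\in\mathbb R$, $M_2>0$, $M_3>0$, $p_{11},p_{12},p_{21},p_{22}>0$, $p_{12}p_{21}<p_{11}p_{22}$, and $M_3/M_2>\max\{\sqrt{3p_{21}/p_{22}},\ 2p_{21}\sqrt{p_{11}p_{12}}/(p_{11}p_{22}-p_{12}p_{21})\}$. (The paper's further hypotheses on the underlying PDE impose no condition on this ODE.) Coordinates $(v,A,s)$; $v_{\rm ep2}=\sqrt{-\mu_1/p_{11}}$, $\widetilde{\mathrm{EP}}_2^\pm=(\pm v_{\rm ep2},0,0)$; $\widetilde{\mathrm{EP}}_2^+$ has positive eigenvalue $2\alpha v_{\rm ep2}$ and "the solution" is the trajectory emanating from $\widetilde{\mathrm{EP}}_2^+$ at $t=-\infty$ along this unstable direction into $s>0$. $\boldsymbol\mu=(\mu_1,\mu_2)$, $|\boldsymbol\mu|=\sqrt{\mu_1^2+\mu_2^2}$, and $O(|\boldsymbol\mu|^\beta)$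 means bounded by a constant times $|\boldsymbol\mu|^\beta$ as $\boldsymbol\mu\to0$. *)

theory Defs
  imports "HOL-Analysis.Analysis"
begin

definition standing_assms :: "real \<Rightarrow> real \<Rightarrow> real \<Rightarrow> real \<Rightarrow> real \<Rightarrow> real \<Rightarrow> real \<Rightarrow> bool" where
  "standing_assms \<alpha> M2 M3 p11 p12 p21 p22 \<longleftrightarrow>
     \<alpha> > 0 \<and> M2 > 0 \<and> M3 > 0 \<and> p11 > 0 \<and> p12 > 0 \<and> p21 > 0 \<and> p22 > 0 \<and>
     p12 * p21 < p11 * p22 \<and>
     M3 / M2 > max (sqrt (3 * p21 / p22)) (2 * p21 * sqrt (p11 * p12) / (p11 * p22 - p12 * p21))"

definition is_sol ::
  "real \<Rightarrow> real \<Rightarrow> real \<Rightarrow> real \<Rightarrow> real \<Rightarrow> real \<Rightarrow> real \<Rightarrow> real \<Rightarrow> real \<Rightarrow> real \<Rightarrow>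
   (real \<Rightarrow> real) \<Rightarrow> (real \<Rightarrow> real) \<Rightarrow> (real \<Rightarrow> real) \<Rightarrow> bool" where
  "is_sol \<alpha> M1 M2 M3 p11 p12 p21 p22 \<mu>1 \<mu>2 v A s \<longleftrightarrow>
     (\<forall>t. (v has_real_derivative
             ((- \<mu>1 - p11 * (v t)^2 + p12 * (A t)^2) * v t - M2 * s t)) (at t)
        \<and> (A has_real_derivative
             ((- \<mu>2 - p21 * (v t)^2 + p22 * (A t)^2) * A t + M3 * s t)) (at t)
        \<and> (s has_real_derivative (2 * \<alpha> * (v t + M1 * s t) * s t)) (at t))"

definition v_ep2 :: "real \<Rightarrow> real \<Rightarrow> real" where
  "v_ep2 p11 \<mu>1 = sqrt (- \<mu>1 / p11)"

text \<open>"The solution": the trajectory leaving EP2+ (as t \<rightarrow> -\<infinity>) along its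
  one-dimensional unstable direction into the half-space s > 0.\<close>
definition the_solution ::
  "real \<Rightarrow> real \<Rightarrow> real \<Rightarrow> real \<Rightarrow> real \<Rightarrow> real \<Rightarrow> real \<Rightarrow> real \<Rightarrow> real \<Rightarrow> real \<Rightarrow>
   (real \<Rightarrow> real) \<Rightarrow> (real \<Rightarrow> real) \<Rightarrow> (real \<Rightarrow> real) \<Rightarrow> bool" where
  "the_solution \<alpha> M1 M2 M3 p11 p12 p21 p22 \<mu>1 \<mu>2 v A s \<longleftrightarrow>
     is_sol \<alpha> M1 M2 M3 p11 p12 p21 p22 \<mu>1 \<mu>2 v A s
     \<and> ((\<lambda>t. (v t, A t, s t)) \<longlongrightarrow> (v_ep2 p11 \<mu>1, 0, 0)) at_bot
     \<and> (\<forall>\<^sub>F t in at_bot. s t > 0)"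

definition preservation ::
  "real \<Rightarrow> real \<Rightarrow> (real \<Rightarrow> real) \<Rightarrow> (real \<Rightarrow> real) \<Rightarrow> (real \<Rightarrow> real) \<Rightarrow> bool" where
  "preservation p11 \<mu>1 v A s \<longleftrightarrow>
     ((\<lambda>t. (v t, A t, s t)) \<longlongrightarrow> (- v_ep2 p11 \<mu>1, 0, 0)) at_top"

end

theory Submission
  imports Defs
begin

(* s > 0 along the solution because s' = 2 alpha (v + M1 s) s is linear in s and s > 0 near
   t = -infinity; A > 0 because A tends to 0 there and is pushed upwards by M3 s > 0 whenever it
   vanishes. With kappa = min 1 (p22/p12) and a suitable k, the barrier
   Phi = p22 A^2 - kappa p21 v^2 - k |mu| increases whenever it vanishes and is eventually negative
   because the solution tends to EP2-, so Phi < 0 for all times: A is controlled by v.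
   With eps = |mu|^(1/2) the Lyapunov function Q = v^2 + eps v + (M2/alpha) s then decreases on its
   level set Q = l eps^2 for small eps, and Q < l eps^2 near t = -infinity, so Q < l eps^2 for all
   times. This sublevel set forces |v| = O(eps) and s = O(eps^2). *)

section \<open>Barriers for scalar differential equations\<close>

lemma first_crossing:
  fixes f :: "real \<Rightarrow> real"
  assumes cont: "continuous_on {a..b} f" and "a \<le> b" "f a < L" "L \<le> f b"
  obtains c where "a < c" "c \<le> b" "f c = L" "\<And>t. a \<le> t \<Longrightarrow> t < c \<Longrightarrow> f t < L"
proof -
  define S where "S = {t \<in> {a..b}. L \<le> f t}"
  have "closed S"
    unfolding S_def by (rule continuous_on_closed_Collect_le[OF continuous_on_const cont closed_atLeastAtMost])
  moreover have "b \<in> S" "bdd_below S"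
    using assms by (auto simp: S_def intro: bdd_belowI[of _ a])
  ultimately have c: "Inf S \<in> S" (is "?c \<in> S")
    using closed_contains_Inf by blast
  have below: "f t < L" if "a \<le> t" "t < ?c" for t
    using that cInf_lower[OF _ \<open>bdd_below S\<close>, of t] c by (force simp: S_def)
  have "a \<le> ?c" "L \<le> f ?c" "?c \<le> b"
    using c by (auto simp: S_def)
  then obtain t where t: "a \<le> t" "t \<le> ?c" "f t = L"
    using IVT'[of f a L ?c] \<open>f a < L\<close> continuous_on_subset[OF cont] by force
  with below have "f ?c = L"
    by (metis not_less order.order_iff_strict)
  moreover from this have "a < ?c"
    using \<open>a \<le> ?c\<close> \<open>f a < L\<close> by (cases "a = ?c") auto
  ultimately show thesis
    using that \<open>?c \<le> b\<close> below by blast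
qed

lemma stays_below_forward:
  fixes f f' :: "real \<Rightarrow> real"
  assumes deriv: "\<And>t. (f has_real_derivative f' t) (at t)"
    and face: "\<And>t. f t = L \<Longrightarrow> f' t < 0"
    and "f t0 < L" "t0 \<le> t1"
  shows "f t1 < L"
proof (rule ccontr)
  assume "\<not> f t1 < L"
  moreover have "continuous_on {t0..t1} f"
    using deriv by (meson DERIV_continuous continuous_at_imp_continuous_on)
  ultimately obtain c where c: "t0 < c" "f c = L" "\<And>t. t0 \<le> t \<Longrightarrow> t < c \<Longrightarrow> f t < L"
    using first_crossing[of t0 t1 f L] \<open>f t0 < L\<close> \<open>t0 \<le> t1\<close> by (metis not_less)
  then obtain d where "0 < d" and left: "\<And>h. 0 < h \<Longrightarrow> h < d \<Longrightarrow> f c < f (c - h)"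
    using DERIV_neg_dec_left[OF deriv face] by blast
  define h where "h = min (d / 2) ((c - t0) / 2)"
  have "0 < h"
    using \<open>0 < d\<close> c(1) by (simp add: h_def)
  moreover have "h \<le> d / 2" "h \<le> (c - t0) / 2"
    unfolding h_def by (rule min.cobounded1, rule min.cobounded2)
  ultimately have "0 < h" "h < d" "t0 \<le> c - h"
    using \<open>0 < d\<close> c(1) by simp_all
  then show False
    using left[of h] c by fastforce
qed

lemma stays_below_backward:
  fixes f f' :: "real \<Rightarrow> real"
  assumes deriv: "\<And>t. (f has_real_derivative f' t) (at t)"
    and face: "\<And>t. f t = L \<Longrightarrow> f' t > 0"
    and "f t1 < L" "t0 \<le> t1"
  shows "f t0 < L"
proof -
  have "((\<lambda>t. f (- t)) has_real_derivative - f' (- t)) (at t)" for t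
    using DERIV_mirror deriv by blast
  from stays_below_forward[OF this, of L "- t1" "- t0"] show ?thesis
    using assms by (simp add: face)
qed

lemma linear_ode_pos:
  fixes s g :: "real \<Rightarrow> real"
  assumes deriv: "\<And>t. (s has_real_derivative g t * s t) (at t)"
    and cont: "\<And>t. isCont g t"
    and "0 < s a" "a \<le> b"
  shows "0 < s b"
proof (rule ccontr)
  assume "\<not> 0 < s b"
  moreover have "continuous_on {a..b} (\<lambda>t. - s t)"
    using deriv by (intro continuous_at_imp_continuous_on continuous_intros) (meson DERIV_isCont)
  ultimately obtain c where c: "a < c" "- s c = 0" "\<And>t. a \<le> t \<Longrightarrow> t < c \<Longrightarrow> - s t < 0"
    using first_crossing[of a b "\<lambda>t. - s t" 0] \<open>0 < s a\<close> \<open>a \<le> b\<close> by auto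
  obtain K where K: "\<And>t. a \<le> t \<Longrightarrow> t \<le> c \<Longrightarrow> - g t \<le> K"
    using isCont_bounded[of a c "\<lambda>t. - g t"] c(1) cont by force
  \<comment> \<open>The integrating factor \<open>exp (K t)\<close> makes \<open>s\<close> nondecreasing up to its first zero.\<close>
  define u where "u t = s t * exp (K * t)" for t
  have "u a \<le> u c"
  proof (rule DERIV_nonneg_imp_nondecreasing[of a c u])
    fix t assume t: "a \<le> t" "t \<le> c"
    have "0 \<le> s t"
      using c t by (cases "t = c") force+
    moreover have "(u has_real_derivative (g t + K) * s t * exp (K * t)) (at t)"
      unfolding u_def by (auto intro!: derivative_eq_intros deriv simp: algebra_simps)
    ultimately show "\<exists>y. (u has_real_derivative y) (at t) \<and> 0 \<le> y"
      using K[OF t] by force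
  qed (use c in simp)
  then show False
    using \<open>0 < s a\<close> c(2) by (simp add: u_def mult_le_0_iff)
qed

lemma forced_linear_ode_nonneg_below:
  fixes f g h :: "real \<Rightarrow> real"
  assumes deriv: "\<And>t. (f has_real_derivative g t * f t + h t) (at t)"
    and forcing: "\<And>t. 0 < h t"
    and damping: "\<forall>\<^sub>F t in at_bot. g t < 0"
    and lim: "(f \<longlongrightarrow> 0) at_bot"
  shows "\<exists>t\<le>t2. 0 \<le> f t"
proof (rule ccontr)
  assume "\<not> (\<exists>t\<le>t2. 0 \<le> f t)"
  then have neg: "f t < 0" if "t \<le> t2" for t
    using that by force
  obtain T where T: "T \<le> t2" "\<And>t. t \<le> T \<Longrightarrow> g t < 0"
    using damping unfolding eventually_at_bot_linorder by (metis nle_le order_trans)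
  have increasing: "f t < f T" if "t < T" for t
  proof (rule DERIV_pos_imp_increasing[OF that])
    fix x assume "t \<le> x" "x \<le> T"
    then have "0 < g x * f x + h x"
      using T neg[of x] forcing[of x] by (simp add: add_pos_pos mult_neg_neg)
    then show "\<exists>y. (f has_real_derivative y) (at x) \<and> 0 < y"
      using deriv by blast
  qed
  have "\<forall>\<^sub>F t in at_bot. f T < f t"
    using order_tendstoD(1)[OF lim neg[OF T(1)]] .
  then obtain N where "\<And>t. t \<le> N \<Longrightarrow> f T < f t"
    unfolding eventually_at_bot_linorder by blast
  then have "f T < f (min N (T - 1))"
    by simp
  moreover have "f (min N (T - 1)) < f T"
    by (rule increasing) simp
  ultimately show False
    by simp
qed

lemma forced_linear_ode_pos:
  fixes f g h :: "real \<Rightarrow> real"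
  assumes deriv: "\<And>t. (f has_real_derivative g t * f t + h t) (at t)"
    and forcing: "\<And>t. 0 < h t"
    and damping: "\<forall>\<^sub>F t in at_bot. g t < 0"
    and lim: "(f \<longlongrightarrow> 0) at_bot"
  shows "0 < f t1"
proof (rule ccontr)
  assume "\<not> 0 < f t1"
  obtain t2 where "f t2 < 0" "t2 \<le> t1"
  proof (cases "f t1 = 0")
    case True
    then have "0 < g t1 * f t1 + h t1"
      using forcing by simp
    then obtain d where "0 < d" "\<And>h. 0 < h \<Longrightarrow> h < d \<Longrightarrow> f (t1 - h) < f t1"
      using DERIV_pos_inc_left[OF deriv] by blast
    with True show thesis
      using that[of "t1 - d/2"] by simp
  next
    case False
    with \<open>\<not> 0 < f t1\<close> show thesis
      using that[of t1] by simp
  qed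
  then have "f t < 0" if "t \<le> t2" for t
    using stays_below_backward[OF deriv _ _ that] forcing by simp
  then show False
    using forced_linear_ode_nonneg_below[OF deriv forcing damping lim, of t2] by force
qed

section \<open>The barrier controlling A\<close>

(* r stands for p12 / p22; kappa and k are the slope and the level of the barrier
   p22 A^2 < kappa p21 v^2 + k |mu|. *)
definition barrier_parameters :: "real \<Rightarrow> real \<Rightarrow> real \<Rightarrow> real \<Rightarrow> real \<Rightarrow> bool" where
  "barrier_parameters p11 p21 r \<kappa> k \<longleftrightarrow>
     0 < \<kappa> \<and> \<kappa> \<le> 1 \<and> \<kappa> * r \<le> 1 \<and> (\<kappa> = 1 \<or> \<kappa> * r = 1) \<and>
     2 \<le> k \<and> p21 < (k - 1) * \<kappa> * (p11 - r * p21)"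

lemma barrier_parametersD:
  assumes "barrier_parameters p11 p21 r \<kappa> k"
  shows "0 < \<kappa>" "\<kappa> \<le> 1" "\<kappa> * r \<le> 1" "\<kappa> = 1 \<or> \<kappa> * r = 1"
    and "2 \<le> k" "p21 < (k - 1) * \<kappa> * (p11 - r * p21)"
  using assms by (simp_all add: barrier_parameters_def)

lemma barrier_parameters_exist:
  fixes r p11 p21 :: real
  assumes "0 < r" "0 < p21" "r * p21 < p11"
  obtains \<kappa> k where "barrier_parameters p11 p21 r \<kappa> k"
proof -
  define \<kappa> where "\<kappa> = min 1 (1 / r)"
  define G where "G = \<kappa> * (p11 - r * p21)"
  define k where "k = 2 + p21 / G"
  have "0 < \<kappa>" "\<kappa> \<le> 1" "\<kappa> * r \<le> 1" "\<kappa> = 1 \<or> \<kappa> * r = 1"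
    using assms(1) by (auto simp: \<kappa>_def min_def field_simps)
  moreover have "0 < G"
    using \<open>0 < \<kappa>\<close> assms(3) by (simp add: G_def)
  then have "2 \<le> k" "(k - 1) * G = G + p21"
    using assms(2) by (simp_all add: k_def distrib_right)
  then have "2 \<le> k" "p21 < (k - 1) * \<kappa> * (p11 - r * p21)"
    using \<open>0 < G\<close> by (simp_all add: G_def mult.assoc)
  ultimately show thesis
    by (intro that) (simp add: barrier_parameters_def)
qed

lemma barrier_parameters_gap_pos:
  assumes "barrier_parameters p11 p21 r \<kappa> k" "0 < p21"
  shows "0 < p11 - r * p21"
proof -
  have "0 < (k - 1) * \<kappa> * (p11 - r * p21)" "0 < (k - 1) * \<kappa>"
    using barrier_parametersD[OF assms(1)] assms(2) by simp_all
  then show ?thesis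
    by (simp add: zero_less_mult_iff)
qed

lemma quadratic_pos_on_nonneg:
  fixes a0 a1 a2 \<beta> w :: real
  assumes "0 < a2" "- a1 \<le> \<beta>" "\<beta>\<^sup>2 < 4 * a0 * a2" "0 \<le> w"
  shows "0 < a0 + a1 * w + a2 * w\<^sup>2"
proof -
  have "4 * a2 * (a0 - \<beta> * w + a2 * w\<^sup>2) = (2 * a2 * w - \<beta>)\<^sup>2 + (4 * a0 * a2 - \<beta>\<^sup>2)"
    by (simp add: algebra_simps power2_eq_square)
  also have "\<dots> > 0"
    using assms(3) by (simp add: add_nonneg_pos)
  finally have "0 < a0 - \<beta> * w + a2 * w\<^sup>2"
    using \<open>0 < a2\<close> by (simp add: zero_less_mult_iff)
  moreover have "- a1 * w \<le> \<beta> * w"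
    using assms(2,4) by (rule mult_right_mono)
  ultimately show ?thesis
    by linarith
qed

lemma barrier_discriminant_neg:
  fixes p21 D \<kappa> k m \<mu>2 :: real
  assumes "0 < p21" "0 < m" "\<bar>\<mu>2\<bar> \<le> m" "0 < \<kappa>" "2 \<le> k" "p21 < (k - 1) * \<kappa> * D"
  shows "(2 * p21 * m * (k * (1 - \<kappa>) + \<kappa>))\<^sup>2
    < 4 * (k * m * (k * m - \<mu>2)) * (\<kappa> * p21 * D + p21\<^sup>2 * (1 - \<kappa>)\<^sup>2)"
proof -
  define a2 where "a2 = \<kappa> * p21 * D + p21\<^sup>2 * (1 - \<kappa>)\<^sup>2"
  have "1 * \<kappa>\<^sup>2 \<le> k * \<kappa>\<^sup>2"
    using assms(5) by (intro mult_right_mono) auto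
  then have "k * (1 - \<kappa>\<^sup>2) + \<kappa>\<^sup>2 \<le> k"
    by (simp add: algebra_simps)
  then have "p21 * (k * (1 - \<kappa>\<^sup>2) + \<kappa>\<^sup>2) \<le> k * p21"
    using assms(1) by (simp add: mult_left_mono mult.commute)
  also have "\<dots> < k * ((k - 1) * \<kappa> * D)"
    using assms(5,6) by simp
  finally have "0 < p21 * (k * ((k - 1) * \<kappa> * D) - p21 * (k * (1 - \<kappa>\<^sup>2) + \<kappa>\<^sup>2))"
    using assms(1) by simp
  also have "\<dots> = k * (k - 1) * a2 - (p21 * (k * (1 - \<kappa>) + \<kappa>))\<^sup>2"
    by (simp add: a2_def algebra_simps power2_eq_square)
  finally have "4 * m\<^sup>2 * (p21 * (k * (1 - \<kappa>) + \<kappa>))\<^sup>2 < 4 * m\<^sup>2 * (k * (k - 1) * a2)"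
    using assms(2) by simp
  then have "(2 * p21 * m * (k * (1 - \<kappa>) + \<kappa>))\<^sup>2 < 4 * (k * (k - 1) * m\<^sup>2) * a2"
    by (simp add: power2_eq_square algebra_simps)
  also have "\<dots> \<le> 4 * (k * m * (k * m - \<mu>2)) * a2"
  proof -
    have "(k - 1) * m \<le> k * m - \<mu>2"
      using assms(3) by (simp add: algebra_simps abs_le_iff)
    then have "k * (k - 1) * m\<^sup>2 \<le> k * m * (k * m - \<mu>2)"
      using assms(2,5) by (simp add: power2_eq_square mult_left_mono algebra_simps)
    moreover have "0 < (k - 1) * \<kappa> * D" "0 < (k - 1) * \<kappa>"
      using assms(1,4-6) by simp_all
    then have "0 < a2"
      using assms(1,4) by (simp add: a2_def zero_less_mult_iff add_pos_nonneg)
    ultimately have "k * (k - 1) * m\<^sup>2 * a2 \<le> k * m * (k * m - \<mu>2) * a2"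
      by (intro mult_right_mono) simp_all
    then show ?thesis
      by simp
  qed
  finally show ?thesis
    by (simp add: a2_def)
qed

lemma phi_face_drift_pos:
  fixes p11 p21 r \<kappa> k m \<mu>1 \<mu>2 w X :: real
  assumes barrier: "barrier_parameters p11 p21 r \<kappa> k"
    and "0 < p21" "0 < m" "\<bar>\<mu>1\<bar> \<le> m" "\<bar>\<mu>2\<bar> \<le> m" "0 \<le> w" and X: "X = \<kappa> * p21 * w + k * m"
  shows "0 < X * (- \<mu>2 - p21 * w + X) - \<kappa> * p21 * w * (- \<mu>1 - p11 * w + r * X)"
proof -
  note \<kappa> = barrier_parametersD(1-4)[OF barrier] and k = barrier_parametersD(5,6)[OF barrier]
  define D where "D = p11 - r * p21"
  define a0 where "a0 = k * m * (k * m - \<mu>2)"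
  define a1 where "a1 = p21 * (k * m * (2 * \<kappa> - 1 - \<kappa> * r) + \<kappa> * (\<mu>1 - \<mu>2))"
  define a2 where "a2 = \<kappa> * p21 * D + p21\<^sup>2 * (1 - \<kappa>)\<^sup>2"
  define \<beta> where "\<beta> = 2 * p21 * m * (k * (1 - \<kappa>) + \<kappa>)"
  \<comment> \<open>The choice of \<open>\<kappa>\<close> makes the cross term \<open>p21\<^sup>2 (1 - \<kappa>) (\<kappa> r - 1)\<close> of the leading coefficient vanish.\<close>
  have expand: "X * (- \<mu>2 - p21 * w + X) - \<kappa> * p21 * w * (- \<mu>1 - p11 * w + r * X)
      = a0 + a1 * w + a2 * w\<^sup>2"
  proof -
    have "X * (- \<mu>2 - p21 * w + X) - \<kappa> * p21 * w * (- \<mu>1 - p11 * w + r * X)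
        - (a0 + a1 * w + a2 * w\<^sup>2) = p21\<^sup>2 * w\<^sup>2 * ((1 - \<kappa>) * (\<kappa> * r - 1))"
      unfolding X a0_def a1_def a2_def D_def
      by (simp add: algebra_simps power2_eq_square)
    moreover have "(1 - \<kappa>) * (\<kappa> * r - 1) = 0"
      using \<kappa>(4) by auto
    ultimately show ?thesis
      by simp
  qed
  have "0 < a2"
    using barrier_parameters_gap_pos[OF barrier] assms(2) \<kappa>(1)
    by (simp add: a2_def D_def add_pos_nonneg)
  moreover have "- a1 \<le> \<beta>"
  proof -
    have "k * m * (1 + \<kappa> * r - 2 * \<kappa>) \<le> k * m * (2 * (1 - \<kappa>))"
      using assms(3) \<kappa>(3) k(1) by (intro mult_left_mono) auto
    moreover have "\<kappa> * (\<mu>2 - \<mu>1) \<le> \<kappa> * (2 * m)"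
      using assms(4,5) \<kappa>(1) by (intro mult_left_mono) auto
    ultimately have "p21 * (k * m * (1 + \<kappa> * r - 2 * \<kappa>) + \<kappa> * (\<mu>2 - \<mu>1))
        \<le> p21 * (k * m * (2 * (1 - \<kappa>)) + \<kappa> * (2 * m))"
      using assms(2) by (intro mult_left_mono[OF add_mono]) simp_all
    then show ?thesis
      unfolding a1_def \<beta>_def by (simp add: algebra_simps)
  qed
  moreover have "\<beta>\<^sup>2 < 4 * a0 * a2"
    unfolding \<beta>_def a0_def a2_def
    using barrier_discriminant_neg[OF assms(2,3,5) \<kappa>(1) k(1) k(2)[folded D_def]] .
  ultimately show ?thesis
    unfolding expand using quadratic_pos_on_nonneg assms(6) by blast
qed

lemma weighted_sum_nonneg_if_sq_dominated:
  fixes c p a b x y :: real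
  assumes "0 \<le> c" "c * y\<^sup>2 \<le> p * x\<^sup>2" "c * b\<^sup>2 \<le> p * a\<^sup>2" "0 \<le> p * a * x"
  shows "0 \<le> p * a * x + c * b * y"
proof -
  have "0 \<le> c * b\<^sup>2" "0 \<le> c * y\<^sup>2"
    using assms(1) by simp_all
  then have "(c * b\<^sup>2) * (c * y\<^sup>2) \<le> (p * a\<^sup>2) * (p * x\<^sup>2)"
    using assms(2,3) by (meson mult_mono order_trans)
  then have "\<bar>c * b * y\<bar>\<^sup>2 \<le> (p * a * x)\<^sup>2"
    by (simp add: power2_eq_square algebra_simps)
  then have "\<bar>c * b * y\<bar> \<le> p * a * x"
    using assms(4) by (rule power2_le_imp_le)
  then show ?thesis
    by linarith
qed

section \<open>The Lyapunov function\<close>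

(* In the rescaled variables x = v / eps, y = s / eps^2 and phi = F / eps^2, where F is the
   coefficient of v in v', this says that Q = v^2 + eps v + (M2 / alpha) s decreases wherever it
   equals l eps^2; the two bounds on phi are those provided by the barrier for A and by mu1 < 0. *)
definition lyapunov_level_decreasing ::
  "real \<Rightarrow> real \<Rightarrow> real \<Rightarrow> real \<Rightarrow> real \<Rightarrow> real \<Rightarrow> real \<Rightarrow> real \<Rightarrow> bool" where
  "lyapunov_level_decreasing \<alpha> M1 M2 p11 R D l \<epsilon> \<longleftrightarrow>
     (\<forall>\<phi> x y. \<phi> \<le> R - D * x\<^sup>2 \<longrightarrow> - p11 * x\<^sup>2 \<le> \<phi> \<longrightarrow> x\<^sup>2 + x + M2 / \<alpha> * y = l \<longrightarrow> 0 < y \<longrightarrow>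
        \<phi> * x * (2 * x + 1) + 2 * M1 * M2 * y\<^sup>2 < M2 * y / \<epsilon>)"

lemma two_abs_le_one_plus_sq:
  fixes x :: real
  shows "2 * \<bar>x\<bar> \<le> 1 + x\<^sup>2"
proof -
  have "0 \<le> (\<bar>x\<bar> - 1)\<^sup>2"
    by simp
  then show ?thesis
    by (simp add: power2_eq_square algebra_simps)
qed

lemma lyapunov_drift_nonpos_far:
  fixes D R \<phi> x :: real
  assumes "0 < D" "0 \<le> R" "R / D + 1/4 \<le> x\<^sup>2" "\<phi> \<le> R - D * x\<^sup>2"
  shows "\<phi> * x * (2 * x + 1) \<le> 0"
proof -
  have "D * (R / D + 1/4) \<le> D * x\<^sup>2"
    using assms(1,3) by (intro mult_left_mono) auto
  moreover have "D * (R / D + 1/4) = R + D / 4"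
    using assms(1) by (simp add: field_simps)
  ultimately have "\<phi> \<le> 0"
    using assms(1,4) by linarith
  moreover have "0 \<le> x * (2 * x + 1)"
  proof (cases "0 \<le> x")
    case False
    have "0 \<le> R / D"
      using assms(1,2) by simp
    then have "0 \<le> (x - 1/2) * (x + 1/2)"
      using assms(3) by (simp add: algebra_simps power2_eq_square)
    then have "x + 1/2 \<le> 0"
      using False by (simp add: zero_le_mult_iff)
    with False show ?thesis
      by (intro mult_nonpos_nonpos) linarith+
  qed simp
  ultimately show ?thesis
    using mult_nonpos_nonneg by (simp add: mult.assoc)
qed

lemma lyapunov_drift_bound_near:
  fixes p11 R b \<phi> x :: real
  assumes "0 \<le> p11" "0 \<le> R" "x\<^sup>2 \<le> b" "\<phi> \<le> R" "- p11 * x\<^sup>2 \<le> \<phi>"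
  shows "\<phi> * x * (2 * x + 1) \<le> (R + p11 * b) * (5/2 * b + 1/2)"
proof -
  have "p11 * x\<^sup>2 \<le> p11 * b"
    using assms(1,3) by (rule mult_left_mono[rotated])
  moreover have "0 \<le> p11 * x\<^sup>2"
    using assms(1) by simp
  ultimately have "\<bar>\<phi>\<bar> \<le> R + p11 * b"
    unfolding abs_le_iff using assms(2,4,5) by (intro conjI) linarith+
  moreover have "\<bar>x * (2 * x + 1)\<bar> \<le> 5/2 * b + 1/2"
  proof -
    have "\<bar>x * (2 * x + 1)\<bar> = \<bar>2 * x\<^sup>2 + x\<bar>"
      by (simp add: power2_eq_square algebra_simps)
    also have "\<dots> \<le> \<bar>2 * x\<^sup>2\<bar> + \<bar>x\<bar>"
      by (rule abs_triangle_ineq)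
    also have "\<dots> = 2 * x\<^sup>2 + \<bar>x\<bar>"
      by simp
    finally show ?thesis
      using two_abs_le_one_plus_sq[of x] assms(3) by linarith
  qed
  ultimately have "\<bar>\<phi>\<bar> * \<bar>x * (2 * x + 1)\<bar> \<le> (R + p11 * b) * (5/2 * b + 1/2)"
    by (rule mult_mono') simp_all
  moreover have "\<phi> * x * (2 * x + 1) \<le> \<bar>\<phi>\<bar> * \<bar>x * (2 * x + 1)\<bar>"
    unfolding mult.assoc[of \<phi>] abs_mult[symmetric] by (rule abs_ge_self)
  ultimately show ?thesis
    by (rule order_trans[rotated])
qed

lemma lyapunov_level_y_bounds:
  fixes \<alpha> M1 M2 l x y :: real
  defines "Y \<equiv> \<alpha> * (l + 1/4) / M2"
  assumes "0 < \<alpha>" "0 < M2" "x\<^sup>2 + x + M2 / \<alpha> * y = l" "0 < y"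
  shows "y \<le> Y" "2 * M1 * M2 * y\<^sup>2 \<le> 2 * \<bar>M1\<bar> * Y * (M2 * y)"
proof -
  have "0 \<le> (x + 1/2)\<^sup>2"
    by simp
  then have "M2 / \<alpha> * y \<le> l + 1/4"
    using assms(4) by (simp add: power2_eq_square algebra_simps)
  then show y: "y \<le> Y"
    using assms(2,3) by (simp add: Y_def field_simps)
  have "M2 * (y * y) \<le> M2 * (Y * y)"
    using mult_right_mono[OF y] assms(3,5) by (simp add: mult_left_mono)
  moreover have "M1 * (M2 * (y * y)) \<le> \<bar>M1\<bar> * (M2 * (y * y))"
    using assms(3) by (intro mult_right_mono) auto
  ultimately show "2 * M1 * M2 * y\<^sup>2 \<le> 2 * \<bar>M1\<bar> * Y * (M2 * y)"
    using mult_left_mono[of "M2 * (y * y)" "M2 * (Y * y)" "\<bar>M1\<bar>"] by (simp add: power2_eq_square algebra_simps)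
qed

lemma lyapunov_level_y_ge_near:
  fixes \<alpha> M2 b l x y :: real
  assumes "0 < \<alpha>" "x\<^sup>2 \<le> b" "3 * b + 1 \<le> l" "x\<^sup>2 + x + M2 / \<alpha> * y = l"
  shows "\<alpha> * l \<le> 2 * (M2 * y)"
proof -
  have "l \<le> 2 * (M2 / \<alpha> * y)"
    using assms(2-4) two_abs_le_one_plus_sq[of x] abs_ge_minus_self[of x] by linarith
  then show ?thesis
    using assms(1) by (simp add: field_simps)
qed

lemma lyapunov_level_decreasing_if_small:
  fixes \<alpha> M1 M2 p11 R D l \<epsilon> :: real
  defines "b \<equiv> R / D + 1/4" and "Y \<equiv> \<alpha> * (l + 1/4) / M2"
  assumes pos: "0 < \<alpha>" "0 < M2" "0 < p11" "0 < D" "0 \<le> R" "0 < \<epsilon>" and l: "3 * b + 1 \<le> l"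
    and small_far: "2 * \<bar>M1\<bar> * Y * \<epsilon> < 1"
    and small_near: "2 * ((R + p11 * b) * (5/2 * b + 1/2) + 2 * \<bar>M1\<bar> * M2 * Y\<^sup>2) * \<epsilon> < \<alpha> * l"
  shows "lyapunov_level_decreasing \<alpha> M1 M2 p11 R D l \<epsilon>"
  unfolding lyapunov_level_decreasing_def
proof (intro allI impI)
  fix \<phi> x y
  assume \<phi>: "\<phi> \<le> R - D * x\<^sup>2" "- p11 * x\<^sup>2 \<le> \<phi>" and face: "x\<^sup>2 + x + M2 / \<alpha> * y = l" and "0 < y"
  note y_le = lyapunov_level_y_bounds(1)[OF pos(1,2) face \<open>0 < y\<close>, folded Y_def]
  note M1_term = lyapunov_level_y_bounds(2)[OF pos(1,2) face \<open>0 < y\<close>, of M1, folded Y_def]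
  show "\<phi> * x * (2 * x + 1) + 2 * M1 * M2 * y\<^sup>2 < M2 * y / \<epsilon>"
  proof (cases "b \<le> x\<^sup>2")
    case True
    have "\<phi> * x * (2 * x + 1) \<le> 0"
      using lyapunov_drift_nonpos_far pos(4,5) True \<phi>(1) by (simp add: b_def)
    moreover have "2 * \<bar>M1\<bar> * Y * (M2 * y) * \<epsilon> < M2 * y"
      using small_far pos(2) \<open>0 < y\<close> mult_strict_left_mono[OF small_far, of "M2 * y"]
      by (simp add: algebra_simps)
    then have "2 * \<bar>M1\<bar> * Y * (M2 * y) < M2 * y / \<epsilon>"
      using pos(6) by (simp add: pos_less_divide_eq)
    ultimately show ?thesis
      using M1_term by linarith
  next
    case False
    have "\<phi> * x * (2 * x + 1) \<le> (R + p11 * b) * (5/2 * b + 1/2)"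
      using False \<phi> pos(3,4,5) by (intro lyapunov_drift_bound_near) (auto intro: order_trans)
    moreover have "0 \<le> Y"
      using \<open>0 < y\<close> y_le by linarith
    then have "2 * \<bar>M1\<bar> * Y * (M2 * y) \<le> 2 * \<bar>M1\<bar> * Y * (M2 * Y)"
      using y_le pos(2) by (intro mult_left_mono) auto
    then have "2 * \<bar>M1\<bar> * Y * (M2 * y) \<le> 2 * \<bar>M1\<bar> * M2 * Y\<^sup>2"
      by (simp add: power2_eq_square algebra_simps)
    ultimately have "(\<phi> * x * (2 * x + 1) + 2 * M1 * M2 * y\<^sup>2) * \<epsilon>
        \<le> ((R + p11 * b) * (5/2 * b + 1/2) + 2 * \<bar>M1\<bar> * M2 * Y\<^sup>2) * \<epsilon>"
      using M1_term pos(6) by (intro mult_right_mono) auto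
    moreover have "\<alpha> * l \<le> 2 * (M2 * y)"
      using lyapunov_level_y_ge_near[OF pos(1) _ l face] False by simp
    ultimately have "(\<phi> * x * (2 * x + 1) + 2 * M1 * M2 * y\<^sup>2) * \<epsilon> < M2 * y"
      using small_near by linarith
    then show ?thesis
      using pos(6) by (simp add: pos_less_divide_eq)
  qed
qed

lemma eventually_lyapunov_level_decreasing:
  fixes \<alpha> M1 M2 p11 R D l :: real
  assumes "0 < \<alpha>" "0 < M2" "0 < p11" "0 < D" "0 \<le> R" "3 * (R / D + 1/4) + 1 \<le> l"
  shows "\<forall>\<^sub>F \<epsilon> in at_right 0. lyapunov_level_decreasing \<alpha> M1 M2 p11 R D l \<epsilon>"
proof -
  define b Y where "b = R / D + 1/4" and "Y = \<alpha> * (l + 1/4) / M2"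
  define K where "K = (R + p11 * b) * (5/2 * b + 1/2) + 2 * \<bar>M1\<bar> * M2 * Y\<^sup>2"
  have "0 < b"
    using assms(4,5) by (simp add: b_def add_nonneg_pos)
  then have "0 < l"
    using assms(6)[folded b_def] by linarith
  have "((\<lambda>\<epsilon>. 2 * \<bar>M1\<bar> * Y * \<epsilon>) \<longlongrightarrow> 0) (at_right 0)" "((\<lambda>\<epsilon>. 2 * K * \<epsilon>) \<longlongrightarrow> 0) (at_right 0)"
    by (auto intro!: tendsto_eq_intros)
  then have "\<forall>\<^sub>F \<epsilon> in at_right 0. 2 * \<bar>M1\<bar> * Y * \<epsilon> < 1" "\<forall>\<^sub>F \<epsilon> in at_right 0. 2 * K * \<epsilon> < \<alpha> * l"
    using \<open>0 < l\<close> assms(1) by (auto elim!: order_tendstoD(2))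
  with eventually_at_right_less[of 0] show ?thesis
  proof eventually_elim
    case (elim \<epsilon>)
    then show ?case
      using assms(6) by (intro lyapunov_level_decreasing_if_small) (simp_all add: assms b_def Y_def K_def)
  qed
qed

lemma lyapunov_sublevel_bounds:
  fixes \<epsilon> l c v s :: real
  assumes "0 < \<epsilon>" "0 < c" "0 < s" "0 \<le> l" and sub: "v\<^sup>2 + \<epsilon> * v + c * s < l * \<epsilon>\<^sup>2"
  shows "\<bar>v\<bar> \<le> (2 * l + 1) * \<epsilon>" "s \<le> (l + 1/4) / c * \<epsilon>\<^sup>2"
proof -
  have "0 \<le> (2 * v + \<epsilon>)\<^sup>2" "(2 * v + \<epsilon>)\<^sup>2 = 4 * v\<^sup>2 + 4 * (\<epsilon> * v) + \<epsilon>\<^sup>2"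
    by (simp, simp add: power2_eq_square algebra_simps)
  then have "c * s \<le> l * \<epsilon>\<^sup>2 + \<epsilon>\<^sup>2 / 4"
    using sub by linarith
  then have "c * s \<le> (l + 1/4) * \<epsilon>\<^sup>2"
    by (simp add: distrib_right)
  then have "s \<le> (l + 1/4) * \<epsilon>\<^sup>2 / c"
    using assms(2) by (simp add: pos_le_divide_eq mult.commute)
  then show "s \<le> (l + 1/4) / c * \<epsilon>\<^sup>2"
    by (simp only: times_divide_eq_left)
  have "0 \<le> (\<bar>v\<bar> - \<epsilon>)\<^sup>2"
    by simp
  then have "2 * (\<epsilon> * \<bar>v\<bar>) \<le> \<epsilon>\<^sup>2 + v\<^sup>2"
    by (simp add: power2_eq_square algebra_simps)
  moreover have "\<epsilon> * (- \<bar>v\<bar>) \<le> \<epsilon> * v"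
    using assms(1) by (intro mult_left_mono) auto
  moreover have "0 < c * s"
    using assms(2,3) by simp
  ultimately have "v\<^sup>2 \<le> (2 * l + 1) * \<epsilon>\<^sup>2"
    using sub by (simp add: algebra_simps)
  also have "\<dots> \<le> (2 * l + 1)\<^sup>2 * \<epsilon>\<^sup>2"
    using assms(4) by (intro mult_right_mono) (simp_all add: power2_eq_square)
  also have "\<dots> = ((2 * l + 1) * \<epsilon>)\<^sup>2"
    by (simp add: power_mult_distrib)
  finally have "\<bar>v\<bar>\<^sup>2 \<le> ((2 * l + 1) * \<epsilon>)\<^sup>2"
    by simp
  moreover have "0 \<le> (2 * l + 1) * \<epsilon>"
    using assms(1,4) by simp
  ultimately show "\<bar>v\<bar> \<le> (2 * l + 1) * \<epsilon>"
    by (rule power2_le_imp_le)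
qed

section \<open>The solution in the preservation regime\<close>

(* Only the first entry of the maximum bounding M3 / M2 is used, and only through the weaker
   consequence p21 M2^2 < p22 M3^2. *)
lemma standing_assmsD:
  assumes "standing_assms \<alpha> M2 M3 p11 p12 p21 p22"
  shows "0 < \<alpha>" "0 < M2" "0 < M3" "0 < p11" "0 < p12" "0 < p21" "0 < p22"
    and "p12 / p22 * p21 < p11" "p21 * M2\<^sup>2 < p22 * M3\<^sup>2"
proof -
  show pos: "0 < \<alpha>" "0 < M2" "0 < M3" "0 < p11" "0 < p12" "0 < p21" "0 < p22"
    using assms by (auto simp: standing_assms_def)
  show "p12 / p22 * p21 < p11"
    using assms pos by (simp add: standing_assms_def field_simps)
  have "p21 / p22 \<le> 3 * p21 / p22"
    using pos by (simp add: field_simps)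
  also have "\<dots> = (sqrt (3 * p21 / p22))\<^sup>2"
    using pos by simp
  also have "\<dots> < (M3 / M2)\<^sup>2"
    using assms pos by (intro power_strict_mono) (auto simp: standing_assms_def)
  finally show "p21 * M2\<^sup>2 < p22 * M3\<^sup>2"
    using pos by (simp add: field_simps power_divide)
qed

locale preserving_solution =
  fixes \<alpha> M1 M2 M3 p11 p12 p21 p22 \<mu>1 \<mu>2 :: real and v A s :: "real \<Rightarrow> real"
  assumes standing: "standing_assms \<alpha> M2 M3 p11 p12 p21 p22"
    and mu1_neg: "\<mu>1 < 0"
    and mu2_gt: "p21 * \<mu>1 / p11 < \<mu>2"
    and solution: "the_solution \<alpha> M1 M2 M3 p11 p12 p21 p22 \<mu>1 \<mu>2 v A s"
    and preserved: "preservation p11 \<mu>1 v A s"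
begin

lemma params_pos: "0 < \<alpha>" "0 < M2" "0 < M3" "0 < p11" "0 < p12" "0 < p21" "0 < p22"
  using standing_assmsD[OF standing] by simp_all

definition F :: "real \<Rightarrow> real" where
  "F t = - \<mu>1 - p11 * (v t)\<^sup>2 + p12 * (A t)\<^sup>2"

lemma v_has_derivative: "(v has_real_derivative F t * v t - M2 * s t) (at t)"
  and A_has_derivative:
    "(A has_real_derivative (- \<mu>2 - p21 * (v t)\<^sup>2 + p22 * (A t)\<^sup>2) * A t + M3 * s t) (at t)"
  and s_has_derivative: "(s has_real_derivative 2 * \<alpha> * (v t + M1 * s t) * s t) (at t)"
  using solution by (simp_all add: the_solution_def is_sol_def F_def)

lemma isCont_v: "isCont v t" and isCont_s: "isCont s t"
  using v_has_derivative s_has_derivative by (blast intro: DERIV_isCont)+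

lemma v_ep2_sq: "(v_ep2 p11 \<mu>1)\<^sup>2 = - \<mu>1 / p11"
  using mu1_neg params_pos(4) by (simp add: v_ep2_def divide_nonpos_pos)

lemma tendsto_at_bot: "(v \<longlongrightarrow> v_ep2 p11 \<mu>1) at_bot" "(A \<longlongrightarrow> 0) at_bot" "(s \<longlongrightarrow> 0) at_bot"
proof -
  have lim: "((\<lambda>t. (v t, A t, s t)) \<longlongrightarrow> (v_ep2 p11 \<mu>1, 0, 0)) at_bot"
    using solution by (simp add: the_solution_def)
  show "(v \<longlongrightarrow> v_ep2 p11 \<mu>1) at_bot" "(A \<longlongrightarrow> 0) at_bot" "(s \<longlongrightarrow> 0) at_bot"
    using tendsto_fst[OF lim] tendsto_fst[OF tendsto_snd[OF lim]] tendsto_snd[OF tendsto_snd[OF lim]]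
    by simp_all
qed

lemma tendsto_at_top: "(v \<longlongrightarrow> - v_ep2 p11 \<mu>1) at_top" "(A \<longlongrightarrow> 0) at_top"
proof -
  have lim: "((\<lambda>t. (v t, A t, s t)) \<longlongrightarrow> (- v_ep2 p11 \<mu>1, 0, 0)) at_top"
    using preserved by (simp add: preservation_def)
  show "(v \<longlongrightarrow> - v_ep2 p11 \<mu>1) at_top" "(A \<longlongrightarrow> 0) at_top"
    using tendsto_fst[OF lim] tendsto_fst[OF tendsto_snd[OF lim]] by simp_all
qed

lemma s_pos: "0 < s t"
proof -
  obtain N where "\<And>a. a \<le> N \<Longrightarrow> 0 < s a"
    using solution by (auto simp: the_solution_def eventually_at_bot_linorder)
  then have "0 < s (min N t)"
    by simp
  moreover have "isCont (\<lambda>t. 2 * \<alpha> * (v t + M1 * s t)) t" for t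
    using isCont_v isCont_s by (intro continuous_intros)
  ultimately show ?thesis
    using linear_ode_pos[of s "\<lambda>t. 2 * \<alpha> * (v t + M1 * s t)" "min N t" t] s_has_derivative
    by simp
qed

lemma A_pos: "0 < A t"
proof (rule forced_linear_ode_pos[OF A_has_derivative])
  show "0 < M3 * s t" for t
    using params_pos(3) s_pos by simp
  have "((\<lambda>t. - \<mu>2 - p21 * (v t)\<^sup>2 + p22 * (A t)\<^sup>2) \<longlongrightarrow> - \<mu>2 - p21 * (v_ep2 p11 \<mu>1)\<^sup>2 + p22 * 0\<^sup>2) at_bot"
    using tendsto_at_bot by (intro tendsto_intros)
  moreover have "- \<mu>2 - p21 * (v_ep2 p11 \<mu>1)\<^sup>2 + p22 * 0\<^sup>2 < 0"
    using mu2_gt by (simp add: v_ep2_sq)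
  ultimately show "\<forall>\<^sub>F t in at_bot. - \<mu>2 - p21 * (v t)\<^sup>2 + p22 * (A t)\<^sup>2 < 0"
    by (rule order_tendstoD(2))
qed (use tendsto_at_bot in simp)

lemma barrier_derivative_pos_on_face:
  fixes \<kappa> k m :: real
  defines "r \<equiv> p12 / p22"
  assumes barrier: "barrier_parameters p11 p21 r \<kappa> k" and m: "0 < m" "\<bar>\<mu>1\<bar> \<le> m" "\<bar>\<mu>2\<bar> \<le> m"
    and face: "p22 * (A t)\<^sup>2 = \<kappa> * p21 * (v t)\<^sup>2 + k * m"
  shows "0 < 2 * p22 * A t * ((- \<mu>2 - p21 * (v t)\<^sup>2 + p22 * (A t)\<^sup>2) * A t + M3 * s t)
    - 2 * \<kappa> * p21 * v t * (F t * v t - M2 * s t)"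
proof -
  note \<kappa> = barrier_parametersD(1,2)[OF barrier] and k = barrier_parametersD(5)[OF barrier]
  define w X where "w = (v t)\<^sup>2" and "X = p22 * (A t)\<^sup>2"
  have X: "X = \<kappa> * p21 * w + k * m"
    using face by (simp add: w_def X_def)
  have p12: "p12 = r * p22"
    using params_pos(7) by (simp add: r_def)
  have split: "2 * p22 * A t * ((- \<mu>2 - p21 * (v t)\<^sup>2 + p22 * (A t)\<^sup>2) * A t + M3 * s t)
      - 2 * \<kappa> * p21 * v t * (F t * v t - M2 * s t)
    = 2 * (X * (- \<mu>2 - p21 * w + X) - \<kappa> * p21 * w * (- \<mu>1 - p11 * w + r * X))
      + 2 * s t * (p22 * M3 * A t + \<kappa> * p21 * M2 * v t)"
    unfolding F_def w_def X_def unfolding p12 by (simp add: algebra_simps power2_eq_square)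
  have "0 < X * (- \<mu>2 - p21 * w + X) - \<kappa> * p21 * w * (- \<mu>1 - p11 * w + r * X)"
    using phi_face_drift_pos[OF barrier params_pos(6) m _ X] by (simp add: w_def)
  moreover have "0 \<le> p22 * M3 * A t + \<kappa> * p21 * M2 * v t"
  proof (rule weighted_sum_nonneg_if_sq_dominated)
    show "0 \<le> \<kappa> * p21"
      using \<kappa>(1) params_pos(6) by simp
    show "\<kappa> * p21 * (v t)\<^sup>2 \<le> p22 * (A t)\<^sup>2"
      using face m(1) k by simp
    have "\<kappa> * (p21 * M2\<^sup>2) \<le> 1 * (p21 * M2\<^sup>2)"
      using \<kappa>(2) params_pos(6) by (intro mult_right_mono) auto
    then show "\<kappa> * p21 * M2\<^sup>2 \<le> p22 * M3\<^sup>2"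
      using standing_assmsD(9)[OF standing] by simp
    show "0 \<le> p22 * M3 * A t"
      using params_pos A_pos[of t] by simp
  qed
  ultimately show ?thesis
    unfolding split using s_pos[of t] by (simp add: add_pos_nonneg)
qed

lemma A_sq_below_v_sq:
  fixes \<kappa> k m :: real
  defines "r \<equiv> p12 / p22"
  assumes barrier: "barrier_parameters p11 p21 r \<kappa> k" and m: "0 < m" "\<bar>\<mu>1\<bar> \<le> m" "\<bar>\<mu>2\<bar> \<le> m"
  shows "p22 * (A t)\<^sup>2 < \<kappa> * p21 * (v t)\<^sup>2 + k * m"
proof -
  define \<Phi> where "\<Phi> t = p22 * (A t)\<^sup>2 - \<kappa> * p21 * (v t)\<^sup>2 - k * m" for t
  have deriv: "(\<Phi> has_real_derivative
      2 * p22 * A t * ((- \<mu>2 - p21 * (v t)\<^sup>2 + p22 * (A t)\<^sup>2) * A t + M3 * s t)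
      - 2 * \<kappa> * p21 * v t * (F t * v t - M2 * s t)) (at t)" for t
    unfolding \<Phi>_def[abs_def]
    by (auto intro!: derivative_eq_intros v_has_derivative A_has_derivative simp: algebra_simps)
  have "(\<Phi> \<longlongrightarrow> p22 * 0\<^sup>2 - \<kappa> * p21 * (- v_ep2 p11 \<mu>1)\<^sup>2 - k * m) at_top"
    unfolding \<Phi>_def[abs_def] using tendsto_at_top by (intro tendsto_intros)
  moreover have "0 \<le> \<kappa> * p21 * (v_ep2 p11 \<mu>1)\<^sup>2" "0 < k * m"
    using barrier_parametersD(1,5)[OF barrier] m(1) params_pos(6) by simp_all
  then have "p22 * 0\<^sup>2 - \<kappa> * p21 * (- v_ep2 p11 \<mu>1)\<^sup>2 - k * m < 0"
    by simp
  ultimately have "\<forall>\<^sub>F t in at_top. \<Phi> t < 0"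
    by (rule order_tendstoD(2))
  then obtain T where "\<Phi> (max T t) < 0"
    unfolding eventually_at_top_linorder by (meson max.cobounded1)
  moreover have "0 < 2 * p22 * A t * ((- \<mu>2 - p21 * (v t)\<^sup>2 + p22 * (A t)\<^sup>2) * A t + M3 * s t)
      - 2 * \<kappa> * p21 * v t * (F t * v t - M2 * s t)" if "\<Phi> t = 0" for t
    using that by (intro barrier_derivative_pos_on_face[OF barrier[unfolded r_def] m]) (simp add: \<Phi>_def)
  ultimately have "\<Phi> t < 0"
    using stays_below_backward[OF deriv] by (meson max.cobounded2)
  then show ?thesis
    by (simp add: \<Phi>_def)
qed

lemma lyapunov_derivative_neg_on_level:
  fixes R D l \<epsilon> :: real
  assumes "0 < \<epsilon>" and drift: "F t \<le> R * \<epsilon>\<^sup>2 - D * (v t)\<^sup>2"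
    and face: "lyapunov_level_decreasing \<alpha> M1 M2 p11 R D l \<epsilon>"
    and level: "(v t)\<^sup>2 + \<epsilon> * v t + M2 / \<alpha> * s t = l * \<epsilon>\<^sup>2"
  shows "F t * v t * (2 * v t + \<epsilon>) - \<epsilon> * M2 * s t + 2 * M1 * M2 * (s t)\<^sup>2 < 0"
proof -
  define x y \<phi> where "x = v t / \<epsilon>" and "y = s t / \<epsilon>\<^sup>2" and "\<phi> = F t / \<epsilon>\<^sup>2"
  have scaled: "v t = \<epsilon> * x" "s t = \<epsilon>\<^sup>2 * y" "F t = \<epsilon>\<^sup>2 * \<phi>"
    using assms(1) by (simp_all add: x_def y_def \<phi>_def)
  have "0 < \<epsilon>\<^sup>2"
    using assms(1) by simp
  have "\<epsilon>\<^sup>2 * \<phi> \<le> \<epsilon>\<^sup>2 * (R - D * x\<^sup>2)"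
    using drift scaled by (simp add: algebra_simps power_mult_distrib)
  then have "\<phi> \<le> R - D * x\<^sup>2"
    using \<open>0 < \<epsilon>\<^sup>2\<close> by simp
  moreover have "0 \<le> p12 * (A t)\<^sup>2"
    using params_pos(5) by simp
  then have "- p11 * (v t)\<^sup>2 \<le> F t"
    using mu1_neg by (simp add: F_def)
  then have "\<epsilon>\<^sup>2 * (- p11 * x\<^sup>2) \<le> \<epsilon>\<^sup>2 * \<phi>"
    using scaled by (simp add: algebra_simps power_mult_distrib)
  then have "- p11 * x\<^sup>2 \<le> \<phi>"
    by (rule mult_left_le_imp_le[OF _ \<open>0 < \<epsilon>\<^sup>2\<close>])
  moreover have "\<epsilon>\<^sup>2 * (x\<^sup>2 + x + M2 / \<alpha> * y) = \<epsilon>\<^sup>2 * l"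
    using level scaled by (simp add: algebra_simps power_mult_distrib power2_eq_square)
  then have "x\<^sup>2 + x + M2 / \<alpha> * y = l"
    using \<open>0 < \<epsilon>\<^sup>2\<close> by simp
  moreover have "0 < y"
    using s_pos[of t] \<open>0 < \<epsilon>\<^sup>2\<close> scaled(2) by (simp add: zero_less_mult_iff)
  ultimately have "\<phi> * x * (2 * x + 1) + 2 * M1 * M2 * y\<^sup>2 < M2 * y / \<epsilon>"
    using face by (simp add: lyapunov_level_decreasing_def)
  then have "(\<phi> * x * (2 * x + 1) + 2 * M1 * M2 * y\<^sup>2) * \<epsilon> - M2 * y < 0"
    using assms(1) by (simp add: pos_less_divide_eq)
  moreover have "F t * v t * (2 * v t + \<epsilon>) - \<epsilon> * M2 * s t + 2 * M1 * M2 * (s t)\<^sup>2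
      = \<epsilon> ^ 3 * ((\<phi> * x * (2 * x + 1) + 2 * M1 * M2 * y\<^sup>2) * \<epsilon> - M2 * y)"
    unfolding scaled by (simp add: algebra_simps power2_eq_square power3_eq_cube)
  ultimately show ?thesis
    using assms(1) by (simp add: mult_pos_neg)
qed

lemma lyapunov_below_level:
  fixes R D l \<epsilon> :: real
  assumes "0 < \<epsilon>" "- \<mu>1 \<le> \<epsilon>\<^sup>2" "3 / (2 * p11) + 1/2 < l"
    and drift: "\<And>t. F t \<le> R * \<epsilon>\<^sup>2 - D * (v t)\<^sup>2"
    and face: "lyapunov_level_decreasing \<alpha> M1 M2 p11 R D l \<epsilon>"
  shows "(v t)\<^sup>2 + \<epsilon> * v t + M2 / \<alpha> * s t < l * \<epsilon>\<^sup>2"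
proof -
  define Q where "Q t = (v t)\<^sup>2 + \<epsilon> * v t + M2 / \<alpha> * s t" for t
  \<comment> \<open>The terms \<open>2 M2 v s\<close> coming from \<open>v'\<close> and from \<open>s'\<close> cancel.\<close>
  have deriv: "(Q has_real_derivative
      F t * v t * (2 * v t + \<epsilon>) - \<epsilon> * M2 * s t + 2 * M1 * M2 * (s t)\<^sup>2) (at t)" for t
    unfolding Q_def[abs_def] using params_pos(1)
    by (auto intro!: derivative_eq_intros v_has_derivative s_has_derivative
        simp: field_simps power2_eq_square)
  have "(Q \<longlongrightarrow> (v_ep2 p11 \<mu>1)\<^sup>2 + \<epsilon> * v_ep2 p11 \<mu>1 + M2 / \<alpha> * 0) at_bot"
    unfolding Q_def[abs_def] using tendsto_at_bot by (intro tendsto_intros)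
  moreover have "(v_ep2 p11 \<mu>1)\<^sup>2 + \<epsilon> * v_ep2 p11 \<mu>1 + M2 / \<alpha> * 0 < l * \<epsilon>\<^sup>2"
  proof -
    have "(v_ep2 p11 \<mu>1)\<^sup>2 \<le> \<epsilon>\<^sup>2 / p11"
      using divide_right_mono[OF assms(2), of p11] params_pos(4) by (simp add: v_ep2_sq)
    moreover have "2 * (\<epsilon> * v_ep2 p11 \<mu>1) \<le> \<epsilon>\<^sup>2 + (v_ep2 p11 \<mu>1)\<^sup>2"
      using sum_squares_bound[of \<epsilon> "v_ep2 p11 \<mu>1"] by (simp add: power2_eq_square)
    moreover have "(3 / (2 * p11) + 1/2) * \<epsilon>\<^sup>2 < l * \<epsilon>\<^sup>2"
      using assms(1,3) by (simp add: mult_strict_right_mono)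
    ultimately show ?thesis
      by (simp add: algebra_simps)
  qed
  ultimately have "\<forall>\<^sub>F t in at_bot. Q t < l * \<epsilon>\<^sup>2"
    by (rule order_tendstoD(2))
  then obtain N where "Q (min N t) < l * \<epsilon>\<^sup>2"
    unfolding eventually_at_bot_linorder by (meson min.cobounded1)
  then have "Q t < l * \<epsilon>\<^sup>2"
    using stays_below_forward[OF deriv] lyapunov_derivative_neg_on_level[OF assms(1) drift face]
    by (simp add: Q_def)
  then show ?thesis
    by (simp add: Q_def)
qed

lemma orbit_in_lyapunov_sublevel:
  fixes \<kappa> k l \<epsilon> :: real
  defines "r \<equiv> p12 / p22"
  assumes barrier: "barrier_parameters p11 p21 r \<kappa> k" and l: "3 / (2 * p11) + 1/2 < l"
    and "0 < \<epsilon>" "\<epsilon>\<^sup>2 = sqrt (\<mu>1\<^sup>2 + \<mu>2\<^sup>2)"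
    and face: "lyapunov_level_decreasing \<alpha> M1 M2 p11 (1 + r * k) (p11 - r * p21) l \<epsilon>"
  shows "(v t)\<^sup>2 + \<epsilon> * v t + M2 / \<alpha> * s t < l * \<epsilon>\<^sup>2"
proof (rule lyapunov_below_level[OF \<open>0 < \<epsilon>\<close> _ l _ face])
  have "\<bar>\<mu>1\<bar> \<le> \<epsilon>\<^sup>2" "\<bar>\<mu>2\<bar> \<le> \<epsilon>\<^sup>2"
    unfolding assms(5) by (auto intro!: real_le_rsqrt)
  then have m: "0 < \<epsilon>\<^sup>2" "\<bar>\<mu>1\<bar> \<le> \<epsilon>\<^sup>2" "\<bar>\<mu>2\<bar> \<le> \<epsilon>\<^sup>2"
    using assms(4) by simp_all
  then show "- \<mu>1 \<le> \<epsilon>\<^sup>2"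
    by linarith
  fix t
  have "0 < r"
    using params_pos(5,7) by (simp add: r_def)
  have p12: "p12 = r * p22"
    using params_pos(7) by (simp add: r_def)
  have "p22 * (A t)\<^sup>2 < \<kappa> * p21 * (v t)\<^sup>2 + k * \<epsilon>\<^sup>2"
    using A_sq_below_v_sq[OF barrier[unfolded r_def] m] .
  then have "r * (p22 * (A t)\<^sup>2) \<le> r * (\<kappa> * p21 * (v t)\<^sup>2 + k * \<epsilon>\<^sup>2)"
    using \<open>0 < r\<close> by (intro mult_left_mono) simp_all
  moreover have "\<kappa> * (r * p21 * (v t)\<^sup>2) \<le> 1 * (r * p21 * (v t)\<^sup>2)"
    using barrier_parametersD(2)[OF barrier] \<open>0 < r\<close> params_pos(6) by (intro mult_right_mono) simp_all
  ultimately show "F t \<le> (1 + r * k) * \<epsilon>\<^sup>2 - (p11 - r * p21) * (v t)\<^sup>2"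
    using \<open>- \<mu>1 \<le> \<epsilon>\<^sup>2\<close> unfolding F_def unfolding p12 by (simp add: algebra_simps)
qed

lemma orbit_bounds:
  fixes \<kappa> k l \<epsilon>0 C :: real
  defines "r \<equiv> p12 / p22"
  assumes barrier: "barrier_parameters p11 p21 r \<kappa> k" and l: "3 / (2 * p11) + 1/2 < l"
    and face: "\<And>\<epsilon>. 0 < \<epsilon> \<Longrightarrow> \<epsilon> < \<epsilon>0 \<Longrightarrow>
      lyapunov_level_decreasing \<alpha> M1 M2 p11 (1 + r * k) (p11 - r * p21) l \<epsilon>"
    and small: "0 < \<epsilon>0" "sqrt (\<mu>1\<^sup>2 + \<mu>2\<^sup>2) < \<epsilon>0\<^sup>2"
    and C: "2 * l + 1 \<le> C" "(l + 1/4) / (M2 / \<alpha>) \<le> C"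
  shows "\<bar>v t\<bar> \<le> C * sqrt (sqrt (\<mu>1\<^sup>2 + \<mu>2\<^sup>2))" "\<bar>s t\<bar> \<le> C * sqrt (\<mu>1\<^sup>2 + \<mu>2\<^sup>2)"
proof -
  define \<epsilon> where "\<epsilon> = sqrt (sqrt (\<mu>1\<^sup>2 + \<mu>2\<^sup>2))"
  have "0 < \<mu>1\<^sup>2 + \<mu>2\<^sup>2"
    using mu1_neg by (simp add: add_pos_nonneg)
  then have "0 < \<epsilon>" and \<epsilon>_sq: "\<epsilon>\<^sup>2 = sqrt (\<mu>1\<^sup>2 + \<mu>2\<^sup>2)"
    by (simp_all add: \<epsilon>_def)
  have "\<epsilon> < sqrt (\<epsilon>0\<^sup>2)"
    unfolding \<epsilon>_def using small(2) by (rule real_sqrt_less_mono)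
  then have "\<epsilon> < \<epsilon>0"
    using small(1) by simp
  have "0 < 3 / (2 * p11)"
    using params_pos(4) by simp
  then have "0 \<le> l"
    using l by linarith
  moreover have "0 < M2 / \<alpha>"
    using params_pos(1,2) by simp
  moreover have "(v t)\<^sup>2 + \<epsilon> * v t + M2 / \<alpha> * s t < l * \<epsilon>\<^sup>2"
    using orbit_in_lyapunov_sublevel[OF barrier[unfolded r_def] l \<open>0 < \<epsilon>\<close> \<epsilon>_sq]
      face[OF \<open>0 < \<epsilon>\<close> \<open>\<epsilon> < \<epsilon>0\<close>] by (simp add: r_def)
  ultimately have v: "\<bar>v t\<bar> \<le> (2 * l + 1) * \<epsilon>" and s: "s t \<le> (l + 1/4) / (M2 / \<alpha>) * \<epsilon>\<^sup>2"
    using lyapunov_sublevel_bounds[OF \<open>0 < \<epsilon>\<close> _ s_pos] by blast+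
  have "\<bar>v t\<bar> \<le> C * \<epsilon>"
    using order_trans[OF v mult_right_mono[OF C(1)]] \<open>0 < \<epsilon>\<close> by simp
  then show "\<bar>v t\<bar> \<le> C * sqrt (sqrt (\<mu>1\<^sup>2 + \<mu>2\<^sup>2))"
    by (simp only: \<epsilon>_def)
  have "\<bar>s t\<bar> \<le> C * \<epsilon>\<^sup>2"
    using order_trans[OF s mult_right_mono[OF C(2)]] s_pos[of t] by simp
  then show "\<bar>s t\<bar> \<le> C * sqrt (\<mu>1\<^sup>2 + \<mu>2\<^sup>2)"
    by (simp only: \<epsilon>_sq)
qed

end

lemma preservation_constants:
  fixes \<alpha> M1 M2 M3 p11 p12 p21 p22 :: real
  defines "r \<equiv> p12 / p22"
  assumes "standing_assms \<alpha> M2 M3 p11 p12 p21 p22"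
  obtains \<kappa> k l \<epsilon>0 where "barrier_parameters p11 p21 r \<kappa> k" "3 / (2 * p11) + 1/2 < l" "0 < \<epsilon>0"
    and "\<And>\<epsilon>. 0 < \<epsilon> \<Longrightarrow> \<epsilon> < \<epsilon>0 \<Longrightarrow>
      lyapunov_level_decreasing \<alpha> M1 M2 p11 (1 + r * k) (p11 - r * p21) l \<epsilon>"
proof -
  note pos = standing_assmsD[OF assms(2)]
  obtain \<kappa> k where barrier: "barrier_parameters p11 p21 r \<kappa> k"
    using barrier_parameters_exist[of r p21 p11] pos by (auto simp: r_def)
  define R D where "R = 1 + r * k" and "D = p11 - r * p21"
  define b l where "b = R / D + 1/4" and "l = 3 * b + 2 / p11 + 1"
  have "0 < D" "0 \<le> R"
    using barrier_parameters_gap_pos[OF barrier pos(6)] barrier_parametersD(5)[OF barrier] pos(5,7)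
    by (simp_all add: D_def R_def r_def)
  then have "0 < b" "0 < 3 / (2 * p11)" "3 / (2 * p11) < 2 / p11"
    using pos(4) by (simp_all add: b_def add_nonneg_pos field_simps)
  then have l: "3 * (R / D + 1/4) + 1 \<le> l" "3 / (2 * p11) + 1/2 < l"
    unfolding l_def b_def[symmetric] by linarith+
  obtain \<epsilon>0 where "0 < \<epsilon>0" "\<And>\<epsilon>. 0 < \<epsilon> \<Longrightarrow> \<epsilon> < \<epsilon>0 \<Longrightarrow> lyapunov_level_decreasing \<alpha> M1 M2 p11 R D l \<epsilon>"
    using eventually_lyapunov_level_decreasing[OF pos(1,2,4) \<open>0 < D\<close> \<open>0 \<le> R\<close> l(1)]
    unfolding eventually_at_right_field by auto
  with barrier l(2) show thesis
    using that unfolding R_def D_def by blast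
qed

theorem lemma5:
  fixes \<alpha> M1 M2 M3 p11 p12 p21 p22 :: real
  assumes "standing_assms \<alpha> M2 M3 p11 p12 p21 p22"
  shows "\<exists>C>0. \<exists>\<delta>>0. \<forall>\<mu>1 \<mu>2 v A s.
           sqrt (\<mu>1^2 + \<mu>2^2) < \<delta> \<longrightarrow> \<mu>1 < 0 \<longrightarrow> \<mu>2 > p21 * \<mu>1 / p11 \<longrightarrow>
           the_solution \<alpha> M1 M2 M3 p11 p12 p21 p22 \<mu>1 \<mu>2 v A s \<longrightarrow>
           preservation p11 \<mu>1 v A s \<longrightarrow>
           (\<forall>t>0. \<bar>v t\<bar> \<le> C * sqrt (sqrt (\<mu>1^2 + \<mu>2^2))
                 \<and> \<bar>s t\<bar> \<le> C * sqrt (\<mu>1^2 + \<mu>2^2))"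
proof -
  obtain \<kappa> k l \<epsilon>0 where barrier: "barrier_parameters p11 p21 (p12 / p22) \<kappa> k"
    and l: "3 / (2 * p11) + 1/2 < l" and "0 < \<epsilon>0"
    and face: "\<And>\<epsilon>. 0 < \<epsilon> \<Longrightarrow> \<epsilon> < \<epsilon>0 \<Longrightarrow>
      lyapunov_level_decreasing \<alpha> M1 M2 p11 (1 + p12 / p22 * k) (p11 - p12 / p22 * p21) l \<epsilon>"
    using preservation_constants[OF assms] by blast
  define C where "C = 2 * l + 1 + (l + 1/4) / (M2 / \<alpha>)"
  have "0 < 3 / (2 * p11)" "0 < M2 / \<alpha>"
    using standing_assmsD(1,2,4)[OF assms] by simp_all
  then have "0 \<le> l"
    using l by linarith
  then have "0 \<le> (l + 1/4) / (M2 / \<alpha>)"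
    using \<open>0 < M2 / \<alpha>\<close> by (intro divide_nonneg_pos) auto
  then have C: "0 < C" "2 * l + 1 \<le> C" "(l + 1/4) / (M2 / \<alpha>) \<le> C"
    using \<open>0 \<le> l\<close> unfolding C_def by linarith+
  show ?thesis
  proof (rule exI[of _ C], intro conjI C(1) exI[of _ "\<epsilon>0\<^sup>2"] allI impI)
    fix \<mu>1 \<mu>2 :: real and v A s :: "real \<Rightarrow> real" and t :: real
    assume small: "sqrt (\<mu>1^2 + \<mu>2^2) < \<epsilon>0\<^sup>2" and hyps: "\<mu>1 < 0" "\<mu>2 > p21 * \<mu>1 / p11"
      "the_solution \<alpha> M1 M2 M3 p11 p12 p21 p22 \<mu>1 \<mu>2 v A s" "preservation p11 \<mu>1 v A s"
    interpret preserving_solution \<alpha> M1 M2 M3 p11 p12 p21 p22 \<mu>1 \<mu>2 v A s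
      using assms hyps by unfold_locales
    show "\<bar>v t\<bar> \<le> C * sqrt (sqrt (\<mu>1^2 + \<mu>2^2))" "\<bar>s t\<bar> \<le> C * sqrt (\<mu>1^2 + \<mu>2^2)"
      using orbit_bounds[OF barrier l face \<open>0 < \<epsilon>0\<close> small C(2,3)] by blast+
  qed (use \<open>0 < \<epsilon>0\<close> in simp)
qed

end
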